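(* Let $d,d'\ge1$, $t_f>0$, let $A:\mathbb{R}^d\to\mathcal{S}^{d'}_{++}$ be $C^3$ with $A(r)\succeq C^{-1}I$ for all $r$, and for each $\varepsilon>0$ let $r_\varepsilon:[0,t_f]\to\mathbb{R}^d$ be a $C^3$ function (the atomic trajectory of the XLMD system described in the context) with $|r_\varepsilon|,|\dot r_\varepsilon|,|\ddot r_\varepsilon|\le C$ on $[0,t_f]$, $C$ independent of $\varepsilon$. For $s\in[0,t_f]$ and $\eta_0,\xi_0\in\mathbb{R}^{d'}$ consider the homogeneous system $$\varepsilon\ddot{\tilde y}_\varepsilon(t)=-A(r_\varepsilon(t))\tilde y_\varepsilon(t),\qquad \tilde y_\varepsilon(s)=\eta_0,\ \dot{\tilde y}_\varepsilon(s)=\xi_0,$$ and its flow map $\Phi^{s,t}_\varepsilon(\eta_0,\xi_0)=(\tilde y_\varepsilon(t),\dot{\tilde y}_\varepsilon(t))$ for $t\ge s$. Let $K_\varepsilon(t)=A(r_\varepsilon(t))^{1/2}$ and let $U^s_{\varepsilon,\pm}(t)$ solve $\dot U^s_{\varepsilon,\pm}(t)=\pm\imath\varepsilon^{-1/2}K_\varepsilon(t)U^s_{\varepsilon,\pm}(t)$, $U^s_{\varepsilon,\pm}(s)=I_{d'}$. Then: (i) there exist functions $c^s_{\varepsilon,+}(t),c^s_{\varepsilon,-}(t)$ such that $$\Phi^{s,t}_\varepsilon(\eta_0,\xi_0)=\begin{pmatrix}U^s_{\varepsilon,+}(t)c^s_{\varepsilon,+}(t)+U^s_{\varepsilon,-}(t)c^s_{\varepsilon,-}(t)\\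 \imath\varepsilon^{-1/2}K_\varepsilon(t)\big[U^s_{\varepsilon,+}(t)c^s_{\varepsilon,+}(t)-U^s_{\varepsilon,-}(t)c^s_{\varepsilon,-}(t)\big]\end{pmatrix}$$ and $|c^s_{\varepsilon,+}(t)|,|c^s_{\varepsilon,-}(t)|\le C(|\eta_0|+\varepsilon^{1/2}|\xi_0|)$, with $C$ independent of $\varepsilon,\eta_0,\xi_0$; (ii) $\Phi^{s,t}_\varepsilon(\eta_0,\xi_0)=\big(\mathcal{O}(|\eta_0|+\varepsilon^{1/2}|\xi_0|),\ \mathcal{O}(\varepsilon^{-1/2}|\eta_0|+|\xi_0|)\big)$, with implied constants independent of $\varepsilon,\eta_0,\xi_0$.
   Context: $\mathcal{S}^{d'}_{++}$ is the set of real symmetric positive definite $d'\times d'$ matrices, and $A(r)^{1/2}$ is the symmetric positive definite square root. In the paper, $r_\varepsilon$ is the atomic component of the solution of the XLMD system $\ddot r_\varepsilon=F(r_\varepsilon)-\frac{\partial Q}{\partial r}(r_\varepsilon,x_\varepsilon)$, $\varepsilon\ddot x_\varepsilon=b(r_\varepsilon)-A(r_\varepsilon)x_\varepsilon$ with $Q(r,x)=\tfrac12x^\top A(r)x-b(r)^\top x$, and the only properties used are the stated regularity and $\varepsilon$-uniform a priori bounds on $[0,t_f]$; the constants may depend on $t_f$ but not on $\varepsilon$, $s$, $t$. *)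

theory Defs
  imports "HOL-Analysis.Analysis"
begin

definition C3_on :: "'a::real_normed_vector set \<Rightarrow> ('a \<Rightarrow> 'b::real_normed_vector) \<Rightarrow> bool" where
  "C3_on S f \<longleftrightarrow>
     (\<exists>(f1 :: 'a \<Rightarrow> 'a \<Rightarrow>\<^sub>L 'b) (f2 :: 'a \<Rightarrow> 'a \<Rightarrow>\<^sub>L ('a \<Rightarrow>\<^sub>L 'b))
        (f3 :: 'a \<Rightarrow> 'a \<Rightarrow>\<^sub>L ('a \<Rightarrow>\<^sub>L ('a \<Rightarrow>\<^sub>L 'b))).
        (\<forall>x\<in>S. (f has_derivative blinfun_apply (f1 x)) (at x within S)) \<and>
        (\<forall>x\<in>S. (f1 has_derivative blinfun_apply (f2 x)) (at x within S)) \<and>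
        (\<forall>x\<in>S. (f2 has_derivative blinfun_apply (f3 x)) (at x within S)) \<and>
        continuous_on S f3)"

definition sym_posdef :: "real^'n^'n \<Rightarrow> bool" where
  "sym_posdef M \<longleftrightarrow> transpose M = M \<and> (\<forall>x. x \<noteq> 0 \<longrightarrow> x \<bullet> (M *v x) > 0)"

definition msqrt :: "real^'n^'n \<Rightarrow> real^'n^'n" where
  "msqrt M = (THE S. sym_posdef S \<and> S ** S = M)"

definition cmat :: "real^'n^'m \<Rightarrow> complex^'n^'m" where
  "cmat M = (\<chi> i j. complex_of_real (M $ i $ j))"

definition cvec :: "real^'n \<Rightarrow> complex^'n" where
  "cvec x = (\<chi> i. complex_of_real (x $ i))"

end

theory Submission
  imports Defs
begin

text \<open>The symmetric positive definite square root \<open>K\<close> of \<open>A(r)\<close> exists and is unique by the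
  spectral theorem, proved here via the Rayleigh quotient, whose maximiser on an invariant subspace
  is an eigenvector. Since \<open>K\<close> is real symmetric and \<open>\<plusminus>\<i> / sqrt \<epsilon>\<close> is imaginary, the propagators
  \<open>U\<^sub>\<plusminus>\<close> are isometries. The scaled energy \<open>\<epsilon> |y'|\<^sup>2 + y \<bullet> A(r(t)) y\<close> has derivative
  \<open>y \<bullet> (A \<circ> r)'(t) y\<close>, which is at most a multiple of the energy because \<open>A \<ge> 1/C\<close> and \<open>r, r'\<close>
  stay in a compact ball. By Gronwall the energy stays below a multiple of
  \<open>(|\<eta>\<^sub>0| + sqrt \<epsilon> |\<xi>\<^sub>0|)\<^sup>2\<close>, which gives (ii). For (i) write \<open>y' = K z\<close>, so that
  \<open>|z| \<le> sqrt C |y'|\<close>, and take \<open>c\<^sub>\<plusminus> = U\<^sub>\<plusminus>\<^sup>-\<^sup>1 ((y \<mp> \<i> sqrt \<epsilon> z) / 2)\<close>.\<close>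

section \<open>Spectral theorem and square roots of symmetric matrices\<close>

lemma nonneg_quadratic_imp_linear_coeff_zero:
  fixes a b :: real
  assumes nonneg: "\<And>t. 0 \<le> a * t + b * t\<^sup>2"
  shows "a = 0"
proof -
  define c where "c = \<bar>b\<bar> + 1"
  have c: "c > 0" by (simp add: c_def)
  have "0 \<le> a * (- a / c) + b * (- a / c)\<^sup>2" by (rule nonneg)
  also have "\<dots> \<le> a * (- a / c) + (c - 1) * (- a / c)\<^sup>2"
    by (intro add_left_mono mult_right_mono) (auto simp: c_def)
  also have "\<dots> = - (a / c)\<^sup>2"
    using c by (simp add: power2_eq_square field_simps)
  finally show ?thesis using c by simp
qed

lemma inner_symmetric_matrix:
  fixes M :: "real^'n^'n"
  assumes "transpose M = M"
  shows "x \<bullet> (M *v y) = (M *v x) \<bullet> y"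
  by (metis assms dot_lmul_matrix transpose_matrix_vector)

lemma transpose_diff: "transpose (A - B) = transpose A - transpose (B::'a::ab_group_add^'n^'n)"
  by (simp add: transpose_def vec_eq_iff)

lemma psd_on_subspace_isotropic_vector:
  fixes N :: "real^'n^'n"
  assumes sym: "transpose N = N" and V: "subspace V"
    and psd: "\<And>x. x \<in> V \<Longrightarrow> 0 \<le> x \<bullet> (N *v x)"
    and v: "v \<in> V" "v \<bullet> (N *v v) = 0" and w: "w \<in> V"
  shows "w \<bullet> (N *v v) = 0"
proof -
  have "2 * (w \<bullet> (N *v v)) = 0"
  proof (rule nonneg_quadratic_imp_linear_coeff_zero)
    fix t
    have "v + t *\<^sub>R w \<in> V" using V v w by (simp add: subspace_add subspace_scale)
    then have "0 \<le> (v + t *\<^sub>R w) \<bullet> (N *v (v + t *\<^sub>R w))" by (rule psd)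
    also have "\<dots> = v \<bullet> (N *v v) + t * (v \<bullet> (N *v w)) + t * (w \<bullet> (N *v v)) + t\<^sup>2 * (w \<bullet> (N *v w))"
      by (simp add: matrix_vector_right_distrib matrix_vector_mult_scaleR inner_add_left
          inner_add_right algebra_simps power2_eq_square)
    also have "v \<bullet> (N *v w) = w \<bullet> (N *v v)"
      using inner_symmetric_matrix[OF sym, of v w] by (simp add: inner_commute)
    finally show "0 \<le> 2 * (w \<bullet> (N *v v)) * t + (w \<bullet> (N *v w)) * t\<^sup>2"
      using v by (simp add: algebra_simps)
  qed
  then show ?thesis by simp
qed

lemma symmetric_matrix_eigenvector_in_subspace:
  fixes M :: "real^'n^'n"
  assumes sym: "transpose M = M" and V: "subspace V" "V \<noteq> {0}"
    and invariant: "\<And>x. x \<in> V \<Longrightarrow> M *v x \<in> V"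
  obtains v where "v \<in> V" "norm v = 1" "M *v v = (v \<bullet> (M *v v)) *\<^sub>R v"
proof -
  define S where "S = sphere (0::real^'n) 1 \<inter> V"
  have compact: "compact S"
    unfolding S_def using compact_Int_closed[OF compact_sphere closed_subspace[OF V(1)]] .
  obtain x0 where "x0 \<in> V" "x0 \<noteq> 0" using V subspace_0 by blast
  then have "x0 /\<^sub>R norm x0 \<in> S" using V by (simp add: S_def subspace_scale)
  then have nonempty: "S \<noteq> {}" by blast
  have continuous: "continuous_on S (\<lambda>x. x \<bullet> (M *v x))"
    by (intro continuous_on_inner continuous_on_id linear_continuous_on matrix_vector_mul_bounded_linear)
  obtain v where v: "v \<in> S" and max: "\<And>x. x \<in> S \<Longrightarrow> x \<bullet> (M *v x) \<le> v \<bullet> (M *v v)"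
    using continuous_attains_sup[OF compact nonempty continuous] by blast
  have vV: "v \<in> V" and nv: "norm v = 1" using v by (auto simp: S_def)
  define l where "l = v \<bullet> (M *v v)"
  define N where "N = l *\<^sub>R mat 1 - M"
  have Nx: "N *v x = l *\<^sub>R x - M *v x" for x
    by (simp add: N_def matrix_vector_mult_diff_rdistrib flip: scaleR_matrix_vector_assoc)
  \<comment> \<open>maximality of \<open>v\<close> makes \<open>N\<close> positive semidefinite on \<open>V\<close>, with \<open>v\<close> isotropic\<close>
  have psd: "0 \<le> x \<bullet> (N *v x)" if "x \<in> V" for x
  proof (cases "x = 0")
    case False
    have "x /\<^sub>R norm x \<in> S" using False that V by (simp add: S_def subspace_scale)
    then have "(x \<bullet> (M *v x)) / (norm x)\<^sup>2 \<le> l"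
      using max[of "x /\<^sub>R norm x"] by (simp add: l_def matrix_vector_mult_scaleR power2_eq_square divide_inverse mult_ac)
    then have "x \<bullet> (M *v x) \<le> l * (norm x)\<^sup>2" using False by (simp add: field_simps)
    then show ?thesis by (simp add: Nx inner_diff_right power2_norm_eq_inner)
  qed simp
  have "v \<bullet> (N *v v) = 0"
    using nv by (simp add: Nx inner_diff_right l_def flip: power2_norm_eq_inner)
  moreover have "N *v v \<in> V"
    unfolding Nx using vV invariant V by (simp add: subspace_diff subspace_scale)
  moreover have "transpose N = N" by (simp add: N_def transpose_diff transpose_scalar sym)
  ultimately have "(N *v v) \<bullet> (N *v v) = 0"
    using psd_on_subspace_isotropic_vector[OF _ V(1) psd vV] by blast
  then have "M *v v = l *\<^sub>R v" by (simp add: Nx)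
  then show ?thesis using that vV nv l_def by blast
qed

lemma symmetric_matrix_eigenbasis_of_subspace:
  fixes M :: "real^'n^'n"
  assumes sym: "transpose M = M"
  shows "subspace V \<Longrightarrow> (\<And>x. x \<in> V \<Longrightarrow> M *v x \<in> V) \<Longrightarrow>
    \<exists>B. B \<subseteq> V \<and> pairwise orthogonal B \<and> span B = V \<and>
        (\<forall>b\<in>B. norm b = 1 \<and> M *v b = (b \<bullet> (M *v b)) *\<^sub>R b)"
proof (induction "dim V" arbitrary: V rule: less_induct)
  case less
  show ?case
  proof (cases "V = {0}")
    case True
    then show ?thesis by (intro exI[of _ "{}"]) auto
  next
    case False
    obtain v where vV: "v \<in> V" and nv: "norm v = 1" and Mv: "M *v v = (v \<bullet> (M *v v)) *\<^sub>R v"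
      using symmetric_matrix_eigenvector_in_subspace[OF sym less.prems(1) False less.prems(2)] by blast
    define W where "W = V \<inter> {x. v \<bullet> x = 0}"
    have W: "subspace W" unfolding W_def by (intro subspace_inter less.prems(1) subspace_hyperplane)
    have invariant: "M *v x \<in> W" if "x \<in> W" for x
    proof -
      have "v \<bullet> (M *v x) = (v \<bullet> (M *v v)) * (v \<bullet> x)"
        using inner_symmetric_matrix[OF sym, of v x] by (metis Mv inner_scaleR_left)
      then show ?thesis using that less.prems(2) by (auto simp: W_def)
    qed
    have "v \<notin> W" using nv by (simp add: W_def flip: power2_norm_eq_inner)
    then have "W \<subset> V" using vV unfolding W_def by blast
    then have "dim W < dim V"
      using dim_psubset W less.prems(1) by (metis span_eq_iff)
    then obtain B where B: "B \<subseteq> W" "pairwise orthogonal B" "span B = W"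
        "\<forall>b\<in>B. norm b = 1 \<and> M *v b = (b \<bullet> (M *v b)) *\<^sub>R b"
      using less.hyps[OF _ W invariant] by blast
    have "V \<subseteq> span (insert v B)"
    proof
      fix x assume "x \<in> V"
      then have "x - (v \<bullet> x) *\<^sub>R v \<in> W"
        using vV less.prems(1) nv
        by (simp add: W_def subspace_diff subspace_scale inner_diff_right flip: power2_norm_eq_inner)
      then show "x \<in> span (insert v B)" unfolding span_breakdown_eq using B(3) by blast
    qed
    moreover have "span (insert v B) \<subseteq> V"
      using B(1) vV less.prems(1) by (intro span_minimal) (auto simp: W_def)
    moreover have "pairwise orthogonal (insert v B)"
      using B(1,2) by (auto simp: pairwise_insert W_def orthogonal_def inner_commute)
    ultimately show ?thesis
      using B(1,4) vV nv Mv by (intro exI[of _ "insert v B"]) (auto simp: W_def)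
  qed
qed

lemma symmetric_matrix_eigenbasis:
  fixes M :: "real^'n^'n"
  assumes "transpose M = M"
  obtains B where "finite B" "pairwise orthogonal B" "span B = UNIV"
    "\<And>b. b \<in> B \<Longrightarrow> norm b = 1" "\<And>b. b \<in> B \<Longrightarrow> M *v b = (b \<bullet> (M *v b)) *\<^sub>R b"
  using symmetric_matrix_eigenbasis_of_subspace[OF assms subspace_UNIV]
    pairwise_orthogonal_imp_finite by blast

lemma orthonormal_sum_inner:
  fixes B :: "'a::real_inner set"
  assumes "finite B" "pairwise orthogonal B" "\<And>b. b \<in> B \<Longrightarrow> norm b = 1" "c \<in> B"
  shows "(\<Sum>b\<in>B. a b *\<^sub>R b) \<bullet> c = a c"
proof -
  have "(\<Sum>b\<in>B. a b *\<^sub>R b) \<bullet> c = (\<Sum>b\<in>B. if b = c then a b else 0)"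
    unfolding inner_sum_left using assms(2-4)
    by (intro sum.cong) (auto simp: pairwise_def orthogonal_def simp flip: power2_norm_eq_inner)
  then show ?thesis using assms(1,4) by simp
qed

lemma symmetric_matrix_eigen_expansion:
  fixes M :: "real^'n^'n"
  assumes B: "finite B" "pairwise orthogonal B" "span B = UNIV" "\<And>b. b \<in> B \<Longrightarrow> norm b = 1"
    and eigen: "\<And>b. b \<in> B \<Longrightarrow> M *v b = (b \<bullet> (M *v b)) *\<^sub>R b"
  shows "M *v x = (\<Sum>b\<in>B. ((b \<bullet> (M *v b)) * (x \<bullet> b)) *\<^sub>R b)"
proof -
  have "M *v x = M *v (\<Sum>b\<in>B. (x \<bullet> b) *\<^sub>R b)"
    using orthonormal_basis_expand[OF B(2,4) _ B(1)] B(3) by simp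
  also have "\<dots> = (\<Sum>b\<in>B. (x \<bullet> b) *\<^sub>R (M *v b))"
    by (simp add: linear_sum[OF matrix_vector_mul_linear] matrix_vector_mult_scaleR o_def)
  also have "\<dots> = (\<Sum>b\<in>B. ((b \<bullet> (M *v b)) * (x \<bullet> b)) *\<^sub>R b)"
    by (intro sum.cong refl) (subst eigen, auto)
  finally show ?thesis .
qed

lemma sym_posdef_sqrt_exists:
  fixes M :: "real^'n^'n"
  assumes M: "sym_posdef M"
  shows "\<exists>S. sym_posdef S \<and> S ** S = M"
proof -
  obtain B where B: "finite B" "pairwise orthogonal B" "span B = UNIV" "\<And>b. b \<in> B \<Longrightarrow> norm b = 1"
    and eigen: "\<And>b. b \<in> B \<Longrightarrow> M *v b = (b \<bullet> (M *v b)) *\<^sub>R b"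
    using symmetric_matrix_eigenbasis M unfolding sym_posdef_def by metis
  define eig where "eig b = b \<bullet> (M *v b)" for b
  have eig_pos: "eig b > 0" if "b \<in> B" for b
  proof -
    have "b \<noteq> 0" using B(4)[OF that] by auto
    then show ?thesis using M by (simp add: sym_posdef_def eig_def)
  qed
  define f where "f x = (\<Sum>b\<in>B. (sqrt (eig b) * (x \<bullet> b)) *\<^sub>R b)" for x
  have "linear f"
    by (rule linearI) (simp_all add: f_def inner_add_left algebra_simps sum.distrib scaleR_sum_right)
  then have Sx: "matrix f *v x = f x" for x by simp
  have f_inner: "f x \<bullet> b = sqrt (eig b) * (x \<bullet> b)" if "b \<in> B" for x b
    unfolding f_def using orthonormal_sum_inner[OF B(1,2,4) that] .
  have "(matrix f ** matrix f) *v x = M *v x" for x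
  proof -
    have "(matrix f ** matrix f) *v x = f (f x)" by (simp add: Sx flip: matrix_vector_mul_assoc)
    also have "\<dots> = (\<Sum>b\<in>B. (sqrt (eig b) * (sqrt (eig b) * (x \<bullet> b))) *\<^sub>R b)"
      unfolding f_def[of "f x"] by (intro sum.cong refl) (simp add: f_inner)
    also have "\<dots> = (\<Sum>b\<in>B. (eig b * (x \<bullet> b)) *\<^sub>R b)"
      by (intro sum.cong refl) (simp add: eig_pos less_imp_le flip: mult.assoc)
    also have "\<dots> = M *v x"
      unfolding eig_def by (rule symmetric_matrix_eigen_expansion[OF B eigen, symmetric])
    finally show ?thesis .
  qed
  then have square: "matrix f ** matrix f = M" by (simp add: matrix_eq)
  have "adjoint f = f"
    by (intro adjoint_unique)
      (simp add: f_def inner_sum_left inner_sum_right inner_commute mult.commute mult.left_commute)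
  then have symmetric: "transpose (matrix f) = matrix f" by (metis \<open>linear f\<close> matrix_adjoint)
  have "x \<bullet> (matrix f *v x) > 0" if "x \<noteq> 0" for x
  proof -
    have "\<exists>c\<in>B. x \<bullet> c \<noteq> 0"
    proof (rule ccontr)
      assume "\<not> (\<exists>c\<in>B. x \<bullet> c \<noteq> 0)"
      then have "(\<Sum>b\<in>B. (x \<bullet> b) *\<^sub>R b) = 0" by simp
      then show False
        using orthonormal_basis_expand[OF B(2,4) _ B(1), of x] B(3) \<open>x \<noteq> 0\<close> by simp
    qed
    then obtain c where c: "c \<in> B" "x \<bullet> c \<noteq> 0" by blast
    have "x \<bullet> (matrix f *v x) = (\<Sum>b\<in>B. sqrt (eig b) * (x \<bullet> b)\<^sup>2)"
      by (simp add: Sx f_def inner_sum_right power2_eq_square mult_ac inner_commute)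
    also have "\<dots> > 0"
      using eig_pos c by (intro sum_pos2[OF B(1) c(1)]) (auto simp: less_imp_le)
    finally show ?thesis .
  qed
  then show ?thesis using square symmetric by (auto simp: sym_posdef_def)
qed

lemma sym_posdef_sqrt_unique:
  fixes S T :: "real^'n^'n"
  assumes S: "sym_posdef S" and T: "sym_posdef T" and eq: "S ** S = T ** T"
  shows "S = T"
proof -
  define D where "D = S - T"
  have Dx: "D *v x = S *v x - T *v x" for x by (simp add: D_def matrix_vector_mult_diff_rdistrib)
  have "transpose D = D" using S T by (simp add: D_def transpose_diff sym_posdef_def)
  then obtain B where B: "finite B" "pairwise orthogonal B" "span B = UNIV" "\<And>b. b \<in> B \<Longrightarrow> norm b = 1"
    and eigen: "\<And>b. b \<in> B \<Longrightarrow> D *v b = (b \<bullet> (D *v b)) *\<^sub>R b"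
    using symmetric_matrix_eigenbasis by blast
  \<comment> \<open>\<open>S\<^sup>2 - T\<^sup>2 = S D + D T\<close>, and both \<open>S\<close>, \<open>T\<close> are positive on an eigenvector of \<open>D\<close>\<close>
  have "b \<bullet> (D *v b) = 0" if b: "b \<in> B" for b
  proof -
    define \<mu> where "\<mu> = b \<bullet> (D *v b)"
    have "b \<noteq> 0" using B(4)[OF b] by auto
    then have pos: "b \<bullet> (S *v b) + b \<bullet> (T *v b) > 0" using S T by (simp add: sym_posdef_def add_pos_pos)
    have "0 = b \<bullet> ((S ** S) *v b) - b \<bullet> ((T ** T) *v b)" using eq by simp
    also have "\<dots> = b \<bullet> (S *v (D *v b)) + b \<bullet> (D *v (T *v b))"
      by (simp add: Dx matrix_vector_mult_diff_distrib inner_diff_right flip: matrix_vector_mul_assoc)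
    also have "b \<bullet> (D *v (T *v b)) = (D *v b) \<bullet> (T *v b)"
      by (rule inner_symmetric_matrix[OF \<open>transpose D = D\<close>])
    also have "b \<bullet> (S *v (D *v b)) + (D *v b) \<bullet> (T *v b) = \<mu> * (b \<bullet> (S *v b) + b \<bullet> (T *v b))"
      by (simp add: eigen[OF b, folded \<mu>_def] matrix_vector_mult_scaleR algebra_simps)
    finally show ?thesis using pos by (simp add: \<mu>_def)
  qed
  then have "D *v x = 0" for x
    using symmetric_matrix_eigen_expansion[OF B eigen, of x] by simp
  then show ?thesis by (simp add: matrix_eq Dx)
qed

lemma msqrt:
  fixes M :: "real^'n^'n"
  assumes "sym_posdef M"
  shows msqrt_sym_posdef: "sym_posdef (msqrt M)" and msqrt_square: "msqrt M ** msqrt M = M"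
proof -
  have "\<exists>!S. sym_posdef S \<and> S ** S = M"
    using sym_posdef_sqrt_exists[OF assms] sym_posdef_sqrt_unique by blast
  then have "sym_posdef (msqrt M) \<and> msqrt M ** msqrt M = M"
    unfolding msqrt_def by (rule theI')
  then show "sym_posdef (msqrt M)" "msqrt M ** msqrt M = M" by auto
qed

lemma mat_matrix_vector_mult: "mat c *v u = (c::'a::comm_semiring_1) *s u"
  by (simp add: vec_eq_iff matrix_vector_mult_def mat_def if_distrib if_distribR cong: if_cong)

lemma matrix_vector_mult_uminus: "A *v (- x) = - (A *v (x::'a::ring_1^'n))"
  by (simp add: vec_eq_iff matrix_vector_mult_def sum_negf)

lemma bounded_bilinear_matrix_vector_mult:
  "bounded_bilinear (\<lambda>(M::'a::{euclidean_space,real_normed_algebra_1}^'n^'m) x. M *v x)"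
  unfolding bilinear_conv_bounded_bilinear[symmetric] bilinear_def
  by (auto simp: linear_iff matrix_vector_mult_def vec_eq_iff algebra_simps sum.distrib scaleR_sum_right)

lemma matrix_vector_surj_if_bounded_below:
  fixes K :: "'a::{euclidean_space,real_normed_algebra_1}^'n^'n"
  assumes below: "\<And>x. norm x \<le> c * norm (K *v x)"
  shows "\<exists>x. K *v x = w"
proof -
  have linear: "linear ((*v) K)"
    using bounded_bilinear.bounded_linear_right[OF bounded_bilinear_matrix_vector_mult]
    by (simp add: bounded_linear.linear)
  have "inj ((*v) K)"
  proof (rule injI)
    fix x x' assume "K *v x = K *v x'"
    then have "K *v (x - x') = 0" by (simp add: matrix_vector_mult_diff_distrib)
    then show "x = x'" using below[of "x - x'"] by simp
  qed
  then have "surj ((*v) K)" using linear linear_injective_imp_surjective by blast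
  then show ?thesis by (metis surjD)
qed

lemma norm_matrix_vector_mult_le:
  fixes A :: "real^'n^'m"
  shows "norm (A *v x) \<le> real CARD('m) * real CARD('n) * norm A * norm x"
proof -
  have "onorm ((*v) A) \<le> real CARD('m) * real CARD('n) * norm A"
  proof (rule onorm_le_matrix_component)
    show "\<bar>A $ i $ j\<bar> \<le> norm A" for i j
      using component_le_norm_cart[of "A $ i" j] Finite_Cartesian_Product.norm_nth_le[of A i] by linarith
  qed
  moreover have "norm (A *v x) \<le> onorm ((*v) A) * norm x"
    by (rule onorm[OF matrix_vector_mul_bounded_linear])
  ultimately show ?thesis by (meson mult_right_mono norm_ge_zero order_trans)
qed

lemma compact_quadratic_form_bound:
  fixes F :: "'a::topological_space \<Rightarrow> real^'n^'n"
  assumes "compact S" and "continuous_on S F"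
  obtains L where "L \<ge> 0" and "\<And>q x. q \<in> S \<Longrightarrow> \<bar>x \<bullet> (F q *v x)\<bar> \<le> L * (x \<bullet> x)"
proof -
  obtain N where N: "N > 0" "\<And>q. q \<in> S \<Longrightarrow> norm (F q) \<le> N"
    using compact_imp_bounded[OF compact_continuous_image[OF assms(2,1)]] unfolding bounded_pos by auto
  define L where "L = real CARD('n) * real CARD('n) * N"
  have "\<bar>x \<bullet> (F q *v x)\<bar> \<le> L * (x \<bullet> x)" if "q \<in> S" for q x
  proof -
    have "\<bar>x \<bullet> (F q *v x)\<bar> \<le> norm x * norm (F q *v x)" by (rule Cauchy_Schwarz_ineq2)
    also have "\<dots> \<le> norm x * (real CARD('n) * real CARD('n) * norm (F q) * norm x)"
      by (intro mult_left_mono norm_matrix_vector_mult_le) simp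
    also have "\<dots> \<le> norm x * (L * norm x)"
      using N(2)[OF that] by (intro mult_left_mono mult_right_mono) (auto simp: L_def)
    finally show ?thesis by (simp add: power2_eq_square mult_ac flip: power2_norm_eq_inner)
  qed
  moreover have "L \<ge> 0" using N by (simp add: L_def)
  ultimately show ?thesis using that by blast
qed

section \<open>Isometric propagators\<close>

lemma inner_imaginary_symmetric_form:
  fixes K :: "real^'n^'n" and w :: "complex^'n"
  assumes sym: "transpose K = K" and c: "Re c = 0"
  shows "w \<bullet> (c *s (cmat K *v w)) = 0"
proof -
  define a where "a = (\<chi> i. Re (w $ i))"
  define b where "b = (\<chi> i. Im (w $ i))"
  have Re: "Re ((cmat K *v w) $ i) = (K *v a) $ i" and Im: "Im ((cmat K *v w) $ i) = (K *v b) $ i" for i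
    by (simp_all add: cmat_def matrix_vector_mult_def a_def b_def)
  \<comment> \<open>\<open>Re c = 0\<close> kills the terms \<open>a \<bullet> K a\<close> and \<open>b \<bullet> K b\<close>\<close>
  have "w \<bullet> (c *s (cmat K *v w)) = (\<Sum>i\<in>UNIV. Im c * (b $ i * (K *v a) $ i - a $ i * (K *v b) $ i))"
    unfolding inner_vec_def using c
    by (intro sum.cong) (auto simp: inner_complex_def Re Im a_def b_def algebra_simps)
  also have "\<dots> = Im c * (b \<bullet> (K *v a) - a \<bullet> (K *v b))"
    by (simp add: inner_vec_def sum_distrib_left sum_subtractf right_diff_distrib)
  also have "b \<bullet> (K *v a) = a \<bullet> (K *v b)"
    using inner_symmetric_matrix[OF sym, of b a] by (simp add: inner_commute)
  finally show ?thesis by simp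
qed

lemma norm_preserving_flow:
  fixes U :: "real \<Rightarrow> complex^'n^'n" and K :: "real \<Rightarrow> real^'n^'n"
  assumes U': "\<And>t. t \<in> {s..T} \<Longrightarrow> (U has_vector_derivative (mat c ** cmat (K t) ** U t)) (at t within {s..T})"
    and U_s: "U s = mat 1" and c: "Re c = 0" and sym: "\<And>t. t \<in> {s..T} \<Longrightarrow> transpose (K t) = K t"
    and t: "t \<in> {s..T}"
  shows "norm (U t *v v) = norm v"
proof -
  define g where "g = (\<lambda>\<tau>. (U \<tau> *v v) \<bullet> (U \<tau> *v v))"
  have "(g has_derivative (\<lambda>h. 0)) (at \<tau> within {s..T})" if \<tau>: "\<tau> \<in> {s..T}" for \<tau>
  proof -
    have Uv': "((\<lambda>\<tau>. U \<tau> *v v) has_vector_derivative c *s (cmat (K \<tau>) *v (U \<tau> *v v))) (at \<tau> within {s..T})"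
      using bounded_bilinear.has_vector_derivative[OF bounded_bilinear_matrix_vector_mult U'[OF \<tau>]
          has_vector_derivative_const[of v]]
      by (simp add: mat_matrix_vector_mult flip: matrix_vector_mul_assoc)
    have "(U \<tau> *v v) \<bullet> (c *s (cmat (K \<tau>) *v (U \<tau> *v v))) = 0"
      by (rule inner_imaginary_symmetric_form[OF sym[OF \<tau>] c])
    then show ?thesis
      using has_derivative_inner[OF Uv'[unfolded has_vector_derivative_def] Uv'[unfolded has_vector_derivative_def]]
      by (simp add: g_def inner_commute)
  qed
  then obtain k where "\<And>\<tau>. \<tau> \<in> {s..T} \<Longrightarrow> g \<tau> = k"
    using has_derivative_zero_constant[of "{s..T}" g] by auto
  then have "g t = g s" using t by auto
  then show ?thesis using U_s by (simp add: g_def norm_eq_sqrt_inner)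
qed

section \<open>Energy estimate\<close>

lemma gronwall_differential:
  fixes E E' :: "real \<Rightarrow> real"
  assumes E': "\<And>\<tau>. \<tau> \<in> {s..T} \<Longrightarrow> (E has_real_derivative E' \<tau>) (at \<tau> within {s..T})"
    and growth: "\<And>\<tau>. \<tau> \<in> {s..T} \<Longrightarrow> E' \<tau> \<le> \<kappa> * E \<tau>"
    and t: "t \<in> {s..T}"
  shows "E t \<le> E s * exp (\<kappa> * (t - s))"
proof -
  define F where "F \<tau> = E \<tau> * exp (- \<kappa> * (\<tau> - s))" for \<tau>
  have F': "(F has_real_derivative (E' \<tau> - \<kappa> * E \<tau>) * exp (- \<kappa> * (\<tau> - s))) (at \<tau> within {s..T})"
    if "\<tau> \<in> {s..T}" for \<tau>
    unfolding F_def using E'[OF that] by (auto intro!: derivative_eq_intros simp: algebra_simps)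
  have "continuous_on {s..T} F"
    using F' by (intro has_derivative_continuous_on) (auto simp: has_field_derivative_def)
  then have "continuous_on {s..t} F" by (rule continuous_on_subset) (use t in auto)
  moreover have "\<exists>D. (F has_real_derivative D) (at x) \<and> D \<le> 0" if "s < x" "x < t" for x
  proof -
    have x: "x \<in> {s..T}" and "at x within {s..T} = at x" using that t by (auto intro: at_within_Icc_at)
    then show ?thesis
      using F'[OF x] growth[OF x] by (auto intro!: mult_nonpos_nonneg)
  qed
  ultimately have "F t \<le> F s"
    using t by (intro DERIV_nonpos_imp_decreasing_open[of s t F]) auto
  then have "F t * exp (\<kappa> * (t - s)) \<le> F s * exp (\<kappa> * (t - s))" by (simp add: mult_right_mono)
  then show ?thesis by (simp add: F_def mult.assoc flip: exp_add)
qed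

lemma oscillator_energy_growth:
  fixes y y' :: "real \<Rightarrow> real^'n" and A A' :: "real \<Rightarrow> real^'n^'n"
  assumes e: "e > 0" and C: "C > 0" and L: "L \<ge> 0"
    and y: "\<And>\<tau>. \<tau> \<in> {s..T} \<Longrightarrow> (y has_vector_derivative y' \<tau>) (at \<tau> within {s..T})"
    and y': "\<And>\<tau>. \<tau> \<in> {s..T} \<Longrightarrow> (y' has_vector_derivative (- (1 / e) *\<^sub>R (A \<tau> *v y \<tau>))) (at \<tau> within {s..T})"
    and A: "\<And>\<tau>. \<tau> \<in> {s..T} \<Longrightarrow> (A has_vector_derivative A' \<tau>) (at \<tau> within {s..T})"
    and sym: "\<And>\<tau>. \<tau> \<in> {s..T} \<Longrightarrow> transpose (A \<tau>) = A \<tau>"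
    and lower: "\<And>\<tau> x. \<tau> \<in> {s..T} \<Longrightarrow> (1 / C) * (x \<bullet> x) \<le> x \<bullet> (A \<tau> *v x)"
    and A'_bound: "\<And>\<tau> x. \<tau> \<in> {s..T} \<Longrightarrow> \<bar>x \<bullet> (A' \<tau> *v x)\<bar> \<le> L * (x \<bullet> x)"
    and t: "t \<in> {s..T}"
  shows "e * (y' t \<bullet> y' t) + y t \<bullet> (A t *v y t) \<le> (e * (y' s \<bullet> y' s) + y s \<bullet> (A s *v y s)) * exp (L * C * (t - s))"
proof -
  define W where "W \<tau> = e * (y' \<tau> \<bullet> y' \<tau>) + y \<tau> \<bullet> (A \<tau> *v y \<tau>)" for \<tau>
  \<comment> \<open>the two terms \<open>\<plusminus>2 y' \<bullet> A y\<close> cancel, leaving only the variation of the coefficient\<close>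
  have W': "(W has_real_derivative y \<tau> \<bullet> (A' \<tau> *v y \<tau>)) (at \<tau> within {s..T})" if \<tau>: "\<tau> \<in> {s..T}" for \<tau>
  proof -
    have Ay: "((\<lambda>\<tau>. A \<tau> *v y \<tau>) has_vector_derivative (A \<tau> *v y' \<tau> + A' \<tau> *v y \<tau>)) (at \<tau> within {s..T})"
      using bounded_bilinear.has_vector_derivative[OF bounded_bilinear_matrix_vector_mult A[OF \<tau>] y[OF \<tau>]]
      by simp
    have "(W has_real_derivative
        e * (y' \<tau> \<bullet> (- (1 / e) *\<^sub>R (A \<tau> *v y \<tau>)) + (- (1 / e) *\<^sub>R (A \<tau> *v y \<tau>)) \<bullet> y' \<tau>)
        + (y \<tau> \<bullet> (A \<tau> *v y' \<tau> + A' \<tau> *v y \<tau>) + y' \<tau> \<bullet> (A \<tau> *v y \<tau>))) (at \<tau> within {s..T})"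
      unfolding W_def has_real_derivative_iff_has_vector_derivative
      by (intro derivative_intros bounded_bilinear.has_vector_derivative[OF bounded_bilinear_inner]
          y[OF \<tau>] y'[OF \<tau>] Ay)
    moreover have "y \<tau> \<bullet> (A \<tau> *v y' \<tau>) = y' \<tau> \<bullet> (A \<tau> *v y \<tau>)"
      using inner_symmetric_matrix[OF sym[OF \<tau>], of "y \<tau>" "y' \<tau>"] by (simp add: inner_commute)
    ultimately show ?thesis using e by (simp add: inner_add_right algebra_simps inner_commute)
  qed
  have "y \<tau> \<bullet> (A' \<tau> *v y \<tau>) \<le> L * C * W \<tau>" if \<tau>: "\<tau> \<in> {s..T}" for \<tau>
  proof -
    have "y \<tau> \<bullet> (A' \<tau> *v y \<tau>) \<le> L * (y \<tau> \<bullet> y \<tau>)" using A'_bound[OF \<tau>] by (simp add: abs_le_iff)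
    also have "\<dots> \<le> L * (C * (y \<tau> \<bullet> (A \<tau> *v y \<tau>)))"
      using lower[OF \<tau>, of "y \<tau>"] C L by (intro mult_left_mono) (auto simp: field_simps)
    also have "\<dots> \<le> L * C * W \<tau>"
      using C L e by (simp add: W_def mult.assoc mult_left_mono)
    finally show ?thesis .
  qed
  then show ?thesis using gronwall_differential[OF W' _ t] by (simp add: W_def)
qed

lemma bounds_from_energy:
  fixes y y' y\<^sub>0 y\<^sub>0' :: "real^'n" and A A\<^sub>0 :: "real^'n^'n"
  assumes e: "e > 0" and C: "C > 0" and M: "M \<ge> 0" and G: "G \<ge> 0"
    and energy: "e * (y' \<bullet> y') + y \<bullet> (A *v y) \<le> (e * (y\<^sub>0' \<bullet> y\<^sub>0') + y\<^sub>0 \<bullet> (A\<^sub>0 *v y\<^sub>0)) * G"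
    and lower: "\<And>x. (1 / C) * (x \<bullet> x) \<le> x \<bullet> (A *v x)"
    and upper: "\<And>x. x \<bullet> (A\<^sub>0 *v x) \<le> M * (x \<bullet> x)"
  defines "Q \<equiv> (1 + sqrt M) * (norm y\<^sub>0 + sqrt e * norm y\<^sub>0')"
  shows "norm y \<le> sqrt C * (sqrt G * Q)" and "sqrt e * norm y' \<le> sqrt G * Q"
proof -
  have Q: "Q \<ge> 0" using M e by (simp add: Q_def)
  have "e * (y\<^sub>0' \<bullet> y\<^sub>0') + y\<^sub>0 \<bullet> (A\<^sub>0 *v y\<^sub>0) \<le> (sqrt e * norm y\<^sub>0')\<^sup>2 + (sqrt M * norm y\<^sub>0)\<^sup>2"
    using upper[of y\<^sub>0] e M by (simp add: power_mult_distrib power2_norm_eq_inner)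
  also have "\<dots> \<le> (sqrt e * norm y\<^sub>0' + sqrt M * norm y\<^sub>0)\<^sup>2"
    using e M by (simp add: power2_sum)
  also have "\<dots> \<le> Q\<^sup>2"
    unfolding Q_def using e M by (intro power_mono) (auto simp: algebra_simps)
  finally have "(e * (y\<^sub>0' \<bullet> y\<^sub>0') + y\<^sub>0 \<bullet> (A\<^sub>0 *v y\<^sub>0)) * G \<le> Q\<^sup>2 * G"
    using G by (rule mult_right_mono)
  with energy have W: "e * (y' \<bullet> y') + y \<bullet> (A *v y) \<le> (sqrt G * Q)\<^sup>2"
    using G by (simp add: power_mult_distrib mult.commute)
  have "0 \<le> (1 / C) * (y \<bullet> y)" using C by simp
  then have Ay: "0 \<le> y \<bullet> (A *v y)" using lower[of y] by linarith
  have "0 \<le> e * (y' \<bullet> y')" using e by simp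
  then have Ay_le: "y \<bullet> (A *v y) \<le> (sqrt G * Q)\<^sup>2" using W by linarith
  have y'_sq: "(sqrt e * norm y')\<^sup>2 \<le> (sqrt G * Q)\<^sup>2"
    using W Ay e by (simp add: power_mult_distrib power2_norm_eq_inner)
  have y_sq: "(norm y)\<^sup>2 \<le> (sqrt C * (sqrt G * Q))\<^sup>2"
  proof -
    have "(norm y)\<^sup>2 \<le> C * (y \<bullet> (A *v y))"
      using lower[of y] C by (simp add: power2_norm_eq_inner field_simps)
    also have "\<dots> \<le> C * (sqrt G * Q)\<^sup>2"
      using Ay_le C by (intro mult_left_mono) auto
    finally show ?thesis using C by (simp add: power_mult_distrib)
  qed
  show "sqrt e * norm y' \<le> sqrt G * Q" by (rule power2_le_imp_le[OF y'_sq]) (use Q G in simp)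
  show "norm y \<le> sqrt C * (sqrt G * Q)" by (rule power2_le_imp_le[OF y_sq]) (use Q G C in simp)
qed

lemma oscillator_solution_bounds:
  fixes y y' :: "real \<Rightarrow> real^'n" and A A' :: "real \<Rightarrow> real^'n^'n"
  assumes e: "e > 0" and C: "C > 0" and L: "L \<ge> 0" and M: "M \<ge> 0"
    and y: "\<And>\<tau>. \<tau> \<in> {s..T} \<Longrightarrow> (y has_vector_derivative y' \<tau>) (at \<tau> within {s..T})"
    and y': "\<And>\<tau>. \<tau> \<in> {s..T} \<Longrightarrow> (y' has_vector_derivative (- (1 / e) *\<^sub>R (A \<tau> *v y \<tau>))) (at \<tau> within {s..T})"
    and A: "\<And>\<tau>. \<tau> \<in> {s..T} \<Longrightarrow> (A has_vector_derivative A' \<tau>) (at \<tau> within {s..T})"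
    and sym: "\<And>\<tau>. \<tau> \<in> {s..T} \<Longrightarrow> transpose (A \<tau>) = A \<tau>"
    and lower: "\<And>\<tau> x. \<tau> \<in> {s..T} \<Longrightarrow> (1 / C) * (x \<bullet> x) \<le> x \<bullet> (A \<tau> *v x)"
    and A'_bound: "\<And>\<tau> x. \<tau> \<in> {s..T} \<Longrightarrow> \<bar>x \<bullet> (A' \<tau> *v x)\<bar> \<le> L * (x \<bullet> x)"
    and upper: "\<And>x. x \<bullet> (A s *v x) \<le> M * (x \<bullet> x)"
    and t: "t \<in> {s..T}"
  defines "B \<equiv> sqrt (exp (L * C * (T - s))) * ((1 + sqrt M) * (norm (y s) + sqrt e * norm (y' s)))"
  shows "norm (y t) \<le> sqrt C * B" and "sqrt e * norm (y' t) \<le> B"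
proof -
  have "0 \<le> (1 / C) * (y s \<bullet> y s)" using C by simp
  then have W_s: "0 \<le> e * (y' s \<bullet> y' s) + y s \<bullet> (A s *v y s)"
    using lower[of s "y s"] t e by (simp add: add_nonneg_nonneg)
  have "e * (y' t \<bullet> y' t) + y t \<bullet> (A t *v y t)
      \<le> (e * (y' s \<bullet> y' s) + y s \<bullet> (A s *v y s)) * exp (L * C * (t - s))"
    by (rule oscillator_energy_growth[OF e C L y y' A sym lower A'_bound t])
  also have "\<dots> \<le> (e * (y' s \<bullet> y' s) + y s \<bullet> (A s *v y s)) * exp (L * C * (T - s))"
    using W_s t C L by (intro mult_left_mono) (auto intro!: mult_left_mono)
  finally show "norm (y t) \<le> sqrt C * B" and "sqrt e * norm (y' t) \<le> B"
    unfolding B_def using bounds_from_energy[OF e C M _ _ lower[OF t] upper] by auto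
qed

section \<open>Amplitude decomposition\<close>

lemma cvec_norm [simp]: "norm (cvec x) = norm x"
  by (simp add: norm_vec_def cvec_def)

lemma cmat_cvec: "cmat K *v cvec z = cvec (K *v z)"
  by (simp add: vec_eq_iff cmat_def cvec_def matrix_vector_mult_def)

lemma norm_vector_smult: "norm ((c::complex) *s (v::complex^'n)) = cmod c * norm v"
  by (simp add: norm_vec_def norm_mult L2_set_right_distrib)

lemma norm_le_msqrt_matrix_vector:
  fixes M :: "real^'n^'n"
  assumes M: "sym_posdef M" and C: "C > 0" and lower: "\<And>x. (1 / C) * (x \<bullet> x) \<le> x \<bullet> (M *v x)"
  shows "norm x \<le> sqrt C * norm (msqrt M *v x)"
proof (rule power2_le_imp_le)
  have "x \<bullet> (M *v x) = (msqrt M *v x) \<bullet> (msqrt M *v x)"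
    using inner_symmetric_matrix[of "msqrt M" x "msqrt M *v x"] msqrt_sym_posdef[OF M] msqrt_square[OF M]
    by (simp add: sym_posdef_def matrix_vector_mul_assoc)
  then show "(norm x)\<^sup>2 \<le> (sqrt C * norm (msqrt M *v x))\<^sup>2"
    using lower[of x] C by (simp add: power_mult_distrib power2_norm_eq_inner field_simps)
qed (use C in simp)

lemma amplitude_decomposition:
  fixes K :: "real^'n^'n" and U V :: "complex^'n^'n" and y y' :: "real^'n"
  assumes e: "e > 0" and K: "\<And>x. norm x \<le> c * norm (K *v x)"
    and U: "\<And>v. norm (U *v v) = norm v" and V: "\<And>v. norm (V *v v) = norm v"
  shows "\<exists>a b. cvec y = U *v a + V *v b \<and>
    cvec y' = (mat (\<i> / complex_of_real (sqrt e)) ** cmat K) *v (U *v a - V *v b) \<and>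
    norm a \<le> (norm y + sqrt e * c * norm y') / 2 \<and> norm b \<le> (norm y + sqrt e * c * norm y') / 2"
proof -
  obtain z where z: "K *v z = y'" using matrix_vector_surj_if_bounded_below[OF K] by blast
  define w where "w = (\<i> * complex_of_real (sqrt e)) *s cvec z"
  have norm_w: "norm w \<le> sqrt e * c * norm y'"
    using K[of z] e by (simp add: w_def norm_vector_smult norm_mult z mult.assoc mult_left_mono)
  obtain a where a: "U *v a = (1/2) *\<^sub>R (cvec y - w)"
    using matrix_vector_surj_if_bounded_below[where K=U and c=1] U by auto
  obtain b where b: "V *v b = (1/2) *\<^sub>R (cvec y + w)"
    using matrix_vector_surj_if_bounded_below[where K=V and c=1] V by auto
  have "(1/2) *\<^sub>R (cvec y - w) + (1/2) *\<^sub>R (cvec y + w) = (1/2) *\<^sub>R (cvec y + cvec y)"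
    by (simp only: flip: scaleR_add_right) (simp add: algebra_simps)
  then have sum: "cvec y = U *v a + V *v b" by (simp add: a b)
  have "(1/2) *\<^sub>R (cvec y - w) - (1/2) *\<^sub>R (cvec y + w) = - ((1/2) *\<^sub>R (w + w))"
    by (simp only: flip: scaleR_diff_right scaleR_minus_right) (simp add: algebra_simps)
  then have "U *v a - V *v b = - w" by (simp add: a b)
  moreover have "(\<i> / complex_of_real (sqrt e)) * (\<i> * complex_of_real (sqrt e)) = - 1"
    using e by (simp add: field_simps)
  ultimately have diff: "(mat (\<i> / complex_of_real (sqrt e)) ** cmat K) *v (U *v a - V *v b) = cvec y'"
    using e by (simp add: w_def mat_matrix_vector_mult matrix_vector_mult_uminus vector_scalar_commute
        cmat_cvec z flip: matrix_vector_mul_assoc)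
  have "norm a \<le> (norm y + sqrt e * c * norm y') / 2"
    using U[of a] a norm_triangle_ineq4[of "cvec y" w] norm_w by simp
  moreover have "norm b \<le> (norm y + sqrt e * c * norm y') / 2"
    using V[of b] b norm_triangle_ineq[of "cvec y" w] norm_w by simp
  ultimately show ?thesis using sum diff by metis
qed

lemma homogeneous_flow_decomposition:
  fixes A A' :: "real \<Rightarrow> real^'n^'n" and y y' :: "real \<Rightarrow> real^'n"
    and U\<^sub>p U\<^sub>m :: "real \<Rightarrow> complex^'n^'n"
  assumes e: "e > 0" and C: "C > 0" and L: "L \<ge> 0" and M: "M \<ge> 0"
    and spd: "\<And>t. t \<in> {s..T} \<Longrightarrow> sym_posdef (A t)"
    and lower: "\<And>t x. t \<in> {s..T} \<Longrightarrow> (1 / C) * (x \<bullet> x) \<le> x \<bullet> (A t *v x)"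
    and upper: "\<And>x. x \<bullet> (A s *v x) \<le> M * (x \<bullet> x)"
    and A': "\<And>t. t \<in> {s..T} \<Longrightarrow> (A has_vector_derivative A' t) (at t within {s..T})"
    and A'_bound: "\<And>t x. t \<in> {s..T} \<Longrightarrow> \<bar>x \<bullet> (A' t *v x)\<bar> \<le> L * (x \<bullet> x)"
    and y: "\<And>t. t \<in> {s..T} \<Longrightarrow> (y has_vector_derivative y' t) (at t within {s..T})"
    and y': "\<And>t. t \<in> {s..T} \<Longrightarrow> (y' has_vector_derivative (- (1 / e) *\<^sub>R (A t *v y t))) (at t within {s..T})"
    and U\<^sub>p: "\<And>t. t \<in> {s..T} \<Longrightarrow> (U\<^sub>p has_vector_derivative
          (mat (\<i> / complex_of_real (sqrt e)) ** cmat (msqrt (A t)) ** U\<^sub>p t)) (at t within {s..T})"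
    and U\<^sub>m: "\<And>t. t \<in> {s..T} \<Longrightarrow> (U\<^sub>m has_vector_derivative
          (mat (- \<i> / complex_of_real (sqrt e)) ** cmat (msqrt (A t)) ** U\<^sub>m t)) (at t within {s..T})"
    and U_s: "U\<^sub>p s = mat 1" "U\<^sub>m s = mat 1"
    and C': "(1 + sqrt C) * sqrt (exp (L * C * (T - s))) * (1 + sqrt M) \<le> C'"
  defines "X \<equiv> norm (y s) + sqrt e * norm (y' s)"
  shows "(\<exists>c\<^sub>p c\<^sub>m :: real \<Rightarrow> complex^'n. \<forall>t\<in>{s..T}.
          cvec (y t) = U\<^sub>p t *v c\<^sub>p t + U\<^sub>m t *v c\<^sub>m t \<and>
          cvec (y' t) = (mat (\<i> / complex_of_real (sqrt e)) ** cmat (msqrt (A t))) *v (U\<^sub>p t *v c\<^sub>p t - U\<^sub>m t *v c\<^sub>m t) \<and>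
          norm (c\<^sub>p t) \<le> C' * X \<and> norm (c\<^sub>m t) \<le> C' * X) \<and>
      (\<forall>t\<in>{s..T}. norm (y t) \<le> C' * X \<and> norm (y' t) \<le> C' * (norm (y s) / sqrt e + norm (y' s)))"
proof -
  define B where "B = sqrt (exp (L * C * (T - s))) * (1 + sqrt M)"
  have X: "X \<ge> 0" and B: "B \<ge> 0" using e M by (simp_all add: X_def B_def)
  have "(1 + sqrt C) * B \<le> C'" using C' by (simp add: B_def mult.assoc)
  moreover have "0 \<le> sqrt C * B" using B C by simp
  ultimately have "sqrt C * B \<le> C'" "B \<le> C'" using B by (simp_all add: algebra_simps)
  then have BX: "sqrt C * (B * X) \<le> C' * X" "B * X \<le> C' * X"
    using X by (simp_all add: mult_right_mono flip: mult.assoc)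
  have sym: "transpose (A t) = A t" "transpose (msqrt (A t)) = msqrt (A t)" if "t \<in> {s..T}" for t
    using spd[OF that] msqrt_sym_posdef[OF spd[OF that]] by (simp_all add: sym_posdef_def)
  have y_bounds: "norm (y t) \<le> sqrt C * (B * X)" "sqrt e * norm (y' t) \<le> B * X" if t: "t \<in> {s..T}" for t
    using oscillator_solution_bounds[OF e C L M y y' A' sym(1) lower A'_bound upper t]
    by (simp_all add: B_def X_def mult.assoc)
  have "\<exists>a b. cvec (y t) = U\<^sub>p t *v a + U\<^sub>m t *v b \<and>
          cvec (y' t) = (mat (\<i> / complex_of_real (sqrt e)) ** cmat (msqrt (A t))) *v (U\<^sub>p t *v a - U\<^sub>m t *v b) \<and>
          norm a \<le> C' * X \<and> norm b \<le> C' * X" if t: "t \<in> {s..T}" for t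
  proof -
    have "sqrt C * (sqrt e * norm (y' t)) \<le> sqrt C * (B * X)"
      using y_bounds(2)[OF t] by (rule mult_left_mono) (use C in simp)
    then have "(norm (y t) + sqrt e * sqrt C * norm (y' t)) / 2 \<le> sqrt C * (B * X)"
      using y_bounds(1)[OF t] by (simp add: mult_ac)
    then have "(norm (y t) + sqrt e * sqrt C * norm (y' t)) / 2 \<le> C' * X"
      using BX(1) by linarith
    moreover have "Re (\<i> / complex_of_real (sqrt e)) = 0" "Re (- \<i> / complex_of_real (sqrt e)) = 0"
      by (simp_all add: Re_divide)
    ultimately show ?thesis
      using amplitude_decomposition[OF e norm_le_msqrt_matrix_vector[OF spd[OF t] C lower[OF t]]
          norm_preserving_flow[OF U\<^sub>p U_s(1) _ sym(2) t] norm_preserving_flow[OF U\<^sub>m U_s(2) _ sym(2) t]]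
      by (meson order_trans)
  qed
  then have "\<exists>c\<^sub>p c\<^sub>m. \<forall>t\<in>{s..T}. cvec (y t) = U\<^sub>p t *v c\<^sub>p t + U\<^sub>m t *v c\<^sub>m t \<and>
          cvec (y' t) = (mat (\<i> / complex_of_real (sqrt e)) ** cmat (msqrt (A t))) *v (U\<^sub>p t *v c\<^sub>p t - U\<^sub>m t *v c\<^sub>m t) \<and>
          norm (c\<^sub>p t) \<le> C' * X \<and> norm (c\<^sub>m t) \<le> C' * X"
    by metis
  moreover have "norm (y' t) \<le> C' * (norm (y s) / sqrt e + norm (y' s))" if "t \<in> {s..T}" for t
    using y_bounds(2)[OF that] BX e by (simp add: X_def field_simps)
  ultimately show ?thesis using y_bounds(1) BX by (meson order_trans)
qed

lemma C3_matrix_field_quadratic_bounds: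
  fixes A :: "'a::euclidean_space \<Rightarrow> real^'n^'n"
  assumes "C3_on UNIV A"
  obtains A' M L where "\<And>q. (A has_derivative blinfun_apply (A' q)) (at q)" and "M \<ge> 0" and "L \<ge> 0"
    and "\<And>q x. norm q \<le> R \<Longrightarrow> \<bar>x \<bullet> (A q *v x)\<bar> \<le> M * (x \<bullet> x)"
    and "\<And>q v x. norm q \<le> R \<Longrightarrow> norm v \<le> R \<Longrightarrow> \<bar>x \<bullet> (A' q v *v x)\<bar> \<le> L * (x \<bullet> x)"
proof -
  obtain A' A'' where A': "\<And>q. (A has_derivative blinfun_apply (A' q)) (at q)"
      and A'': "\<And>q. (A' has_derivative blinfun_apply (A'' q)) (at q)"
    using assms unfolding C3_on_def by auto
  have "continuous_on UNIV A" by (rule has_derivative_continuous_on) (use A' in auto)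
  then obtain M where M: "M \<ge> 0" "\<And>q x. q \<in> cball 0 R \<Longrightarrow> \<bar>x \<bullet> (A q *v x)\<bar> \<le> M * (x \<bullet> x)"
    using compact_quadratic_form_bound[OF compact_cball continuous_on_subset] by blast
  have "continuous_on UNIV A'" by (rule has_derivative_continuous_on) (use A'' in auto)
  then have "continuous_on (cball 0 R \<times> cball 0 R) (\<lambda>(q, v). A' q v)"
    unfolding case_prod_unfold
    by (intro continuous_intros continuous_on_compose2[OF \<open>continuous_on UNIV A'\<close>]) auto
  then obtain L where L: "L \<ge> 0"
    "\<And>p x. p \<in> cball 0 R \<times> cball 0 R \<Longrightarrow> \<bar>x \<bullet> ((\<lambda>(q, v). A' q v) p *v x)\<bar> \<le> L * (x \<bullet> x)"
    using compact_quadratic_form_bound[OF compact_Times[OF compact_cball compact_cball]] by blast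
  show ?thesis
    by (rule that[OF A' M(1) L(1)]) (use M(2) L(2)[of "(_, _)"] in auto)
qed

theorem lemma3p1:
  fixes A :: "real^'d \<Rightarrow> real^'e^'e"
    and r r1 r2 :: "real \<Rightarrow> real \<Rightarrow> real^'d"
    and tf C :: real
  assumes tf: "tf > 0"
    and C: "C > 0"
    and A_C3: "C3_on UNIV A"
    and A_spd: "\<forall>q. sym_posdef (A q)"
    and A_lower: "\<forall>q x. x \<bullet> (A q *v x) \<ge> (1 / C) * (x \<bullet> x)"
    and r_C3: "\<forall>\<epsilon>>0. C3_on {0..tf} (r \<epsilon>)"
    and r_d1: "\<forall>\<epsilon>>0. \<forall>t\<in>{0..tf}. (r \<epsilon> has_vector_derivative r1 \<epsilon> t) (at t within {0..tf})"
    and r_d2: "\<forall>\<epsilon>>0. \<forall>t\<in>{0..tf}. (r1 \<epsilon> has_vector_derivative r2 \<epsilon> t) (at t within {0..tf})"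
    and r_bd: "\<forall>\<epsilon>>0. \<forall>t\<in>{0..tf}. norm (r \<epsilon> t) \<le> C \<and> norm (r1 \<epsilon> t) \<le> C \<and> norm (r2 \<epsilon> t) \<le> C"
  shows "\<exists>C'. \<forall>\<epsilon>>0. \<forall>s\<in>{0..tf}. \<forall>(\<eta>0::real^'e) (\<xi>0::real^'e) y y1
           (Up :: real \<Rightarrow> complex^'e^'e) (Um :: real \<Rightarrow> complex^'e^'e).
      (\<forall>t\<in>{s..tf}. (y has_vector_derivative y1 t) (at t within {s..tf}) \<and>
          (y1 has_vector_derivative (- (1 / \<epsilon>) *\<^sub>R (A (r \<epsilon> t) *v y t))) (at t within {s..tf})) \<and>
      y s = \<eta>0 \<and> y1 s = \<xi>0 \<and>
      (\<forall>t\<in>{s..tf}. (Up has_vector_derivative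
          (mat (\<i> / complex_of_real (sqrt \<epsilon>)) ** cmat (msqrt (A (r \<epsilon> t))) ** Up t)) (at t within {s..tf})) \<and>
      Up s = mat 1 \<and>
      (\<forall>t\<in>{s..tf}. (Um has_vector_derivative
          (mat (- \<i> / complex_of_real (sqrt \<epsilon>)) ** cmat (msqrt (A (r \<epsilon> t))) ** Um t)) (at t within {s..tf})) \<and>
      Um s = mat 1
      \<longrightarrow>
      (\<exists>cp cm :: real \<Rightarrow> complex^'e. \<forall>t\<in>{s..tf}.
          cvec (y t) = Up t *v cp t + Um t *v cm t \<and>
          cvec (y1 t) = (mat (\<i> / complex_of_real (sqrt \<epsilon>)) ** cmat (msqrt (A (r \<epsilon> t))))
                           *v (Up t *v cp t - Um t *v cm t) \<and>
          norm (cp t) \<le> C' * (norm \<eta>0 + sqrt \<epsilon> * norm \<xi>0) \<and>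
          norm (cm t) \<le> C' * (norm \<eta>0 + sqrt \<epsilon> * norm \<xi>0)) \<and>
      (\<forall>t\<in>{s..tf}.
          norm (y t) \<le> C' * (norm \<eta>0 + sqrt \<epsilon> * norm \<xi>0) \<and>
          norm (y1 t) \<le> C' * (norm \<eta>0 / sqrt \<epsilon> + norm \<xi>0))"
proof -
  obtain A' M L where A': "\<And>q. (A has_derivative blinfun_apply (A' q)) (at q)" and M: "M \<ge> 0"
    "\<And>q x. norm q \<le> C \<Longrightarrow> \<bar>x \<bullet> (A q *v x)\<bar> \<le> M * (x \<bullet> x)"
    and L: "L \<ge> 0" "\<And>q v x. norm q \<le> C \<Longrightarrow> norm v \<le> C \<Longrightarrow> \<bar>x \<bullet> (A' q v *v x)\<bar> \<le> L * (x \<bullet> x)"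
    using C3_matrix_field_quadratic_bounds[OF A_C3] by metis
  show ?thesis
  proof (intro exI[of _ "(1 + sqrt C) * sqrt (exp (L * C * tf)) * (1 + sqrt M)"] allI impI ballI,
      elim conjE, goal_cases)
    case (1 \<epsilon> s \<eta>0 \<xi>0 y y1 Up Um)
    then have \<epsilon>: "\<epsilon> > 0" and s: "s \<in> {0..tf}" by simp_all
    then have r: "norm (r \<epsilon> t) \<le> C" "norm (r1 \<epsilon> t) \<le> C"
      and r': "(r \<epsilon> has_vector_derivative r1 \<epsilon> t) (at t within {s..tf})" if "t \<in> {s..tf}" for t
      using that r_bd r_d1 has_vector_derivative_within_subset[of "r \<epsilon>" _ t "{0..tf}" "{s..tf}"] by auto
    have A_r': "((\<lambda>t. A (r \<epsilon> t)) has_vector_derivative A' (r \<epsilon> t) (r1 \<epsilon> t)) (at t within {s..tf})"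
      if "t \<in> {s..tf}" for t
      using vector_derivative_diff_chain_within[OF r'[OF that] has_derivative_at_withinI[OF A']]
      by (simp add: o_def)
    have A_r'_bound: "\<bar>x \<bullet> (A' (r \<epsilon> t) (r1 \<epsilon> t) *v x)\<bar> \<le> L * (x \<bullet> x)" if "t \<in> {s..tf}" for t x
      using L(2) r[OF that] by blast
    have upper: "x \<bullet> (A (r \<epsilon> s) *v x) \<le> M * (x \<bullet> x)" for x
      using M(2)[OF r(1), of s x] s by (simp add: abs_le_iff)
    have C': "(1 + sqrt C) * sqrt (exp (L * C * (tf - s))) * (1 + sqrt M)
        \<le> (1 + sqrt C) * sqrt (exp (L * C * tf)) * (1 + sqrt M)"
      using s C L M by (intro mult_right_mono mult_left_mono) (auto intro!: mult_left_mono)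
    show ?case
      unfolding \<open>y s = \<eta>0\<close>[symmetric] \<open>y1 s = \<xi>0\<close>[symmetric]
      by (rule homogeneous_flow_decomposition[where A = "\<lambda>t. A (r \<epsilon> t)" and y' = y1, OF \<epsilon> C L(1) M(1)
            _ _ upper A_r' A_r'_bound _ _ _ _ _ _ C'])
        (use 1 A_spd A_lower in auto)
  qed
qed

end
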